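(* Let $(x^{(i)},y^{(i)},s^{(i)})$, $i=1,\dots,\ell$, be the weighted centers of $w^{(i)}\in\mathbb R^m_{++}$. Let $\beta_i\in[0,1]$ with $\sum_{i=1}^\ell\beta_i=1$, and fix $j\in\{1,\dots,\ell\}$. Then $\bigl(\sum_i\beta_ix^{(i)},\,y^{(j)},\,\sum_i\beta_is^{(i)}\bigr)$ is the weighted center of $$w:=\sum_{i=1}^\ell\beta_iY^{(j)}(Y^{(i)})^{-1}w^{(i)},$$ and moreover $\sum_{k=1}^m w_k=\sum_{k=1}^m w^{(j)}_k$.
   Context: Let $A\in\mathbb R^{m\times n}$ have full column rank $n\le m$ and $b\in\mathbb R^m$ be such that $\{x:Ax\le b\}$ is bounded with nonempty interior. For $w\in\mathbb R^m_{++}$ the weighted center of $w$ is the unique $(x,y,s)$ with $Ax+s=b$, $s>0$, $A^\top y=0$, $\mathrm{Diag}(s)y=w$. $Y^{(i)}=\mathrm{Diag}(y^{(i)})$. *)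

theory Defs
  imports "HOL-Analysis.Analysis"
begin

definition standing_assms :: "real^'n^'m \<Rightarrow> real^'m \<Rightarrow> bool" where
  "standing_assms A b \<longleftrightarrow> rank A = CARD('n) \<and>
     bounded {x. \<forall>k. (A *v x) $ k \<le> b $ k} \<and>
     interior {x. \<forall>k. (A *v x) $ k \<le> b $ k} \<noteq> {}"

definition is_weighted_center ::
  "real^'n^'m \<Rightarrow> real^'m \<Rightarrow> real^'m \<Rightarrow> real^'n \<Rightarrow> real^'m \<Rightarrow> real^'m \<Rightarrow> bool" where
  "is_weighted_center A b w x y s \<longleftrightarrow>
     (\<forall>k. w $ k > 0) \<and> A *v x + s = b \<and> (\<forall>k. s $ k > 0) \<and>
     transpose A *v y = 0 \<and> (\<forall>k. s $ k * y $ k = w $ k)"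

end

theory Submission
  imports Defs
begin

text \<open>All slacks s with A x + s = b differ by an element of the range of A, which is
  orthogonal to the kernel of A^T; hence y^T s, the total weight of a weighted center,
  does not depend on the primal point. Averaging the primal parts of several weighted
  centers keeps A x + s = b and positivity of s, so pairing the averaged slack with a
  fixed dual y(j) gives a weighted center of total weight y(j)^T s(j).\<close>

lemma is_weighted_centerI:
  assumes "A *v x + s = b" and "\<And>k. s $ k > 0" and "\<And>k. y $ k > 0"
    and "transpose A *v y = 0"
  shows "is_weighted_center A b (\<chi> k. s $ k * y $ k) x y s"
  using assms by (simp add: is_weighted_center_def)

lemma weighted_center_dual_pos:
  assumes "is_weighted_center A b w x y s"
  shows "y $ k > 0"
proof -
  have "s $ k * y $ k > 0" and "s $ k > 0"
    using assms by (auto simp: is_weighted_center_def)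
  then show ?thesis by (simp add: zero_less_mult_iff)
qed

lemma weighted_center_weight_div_dual:
  assumes "is_weighted_center A b w x y s"
  shows "w $ k / y $ k = s $ k"
  using assms weighted_center_dual_pos[OF assms, of k]
  by (auto simp: is_weighted_center_def nonzero_divide_eq_eq)

lemma weighted_center_total_weight:
  assumes "is_weighted_center A b w x y s"
  shows "(\<Sum>k\<in>UNIV. w $ k) = y \<bullet> s"
  using assms by (simp add: is_weighted_center_def inner_vec_def mult.commute)

lemma inner_dual_slack_eq:
  fixes A :: "real^'n^'m"
  assumes "transpose A *v y = 0" and "A *v x + s = b" and "A *v x' + s' = b"
  shows "y \<bullet> s = y \<bullet> s'"
proof -
  have "s = b - A *v x" and "s' = b - A *v x'"
    using assms(2,3) by (auto simp: eq_diff_eq add.commute)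
  then have "s - s' = A *v (x' - x)"
    by (simp add: matrix_vector_mult_diff_distrib)
  then have "y \<bullet> (s - s') = (y v* A) \<bullet> (x' - x)"
    by (simp add: dot_lmul_matrix)
  then show ?thesis
    using assms(1) by (simp add: inner_diff_right)
qed

lemma affine_comb_feasible:
  fixes A :: "real^'n^'m"
  assumes "\<And>i. i \<in> I \<Longrightarrow> A *v x i + s i = b" and "(\<Sum>i\<in>I. \<beta> i) = 1"
  shows "A *v (\<Sum>i\<in>I. \<beta> i *\<^sub>R x i) + (\<Sum>i\<in>I. \<beta> i *\<^sub>R s i) = b"
proof -
  have "A *v (\<Sum>i\<in>I. \<beta> i *\<^sub>R x i) + (\<Sum>i\<in>I. \<beta> i *\<^sub>R s i)
      = (\<Sum>i\<in>I. \<beta> i *\<^sub>R (A *v x i + s i))"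
    by (simp add: linear_sum[OF matrix_vector_mul_linear] linear_cmul[OF matrix_vector_mul_linear] o_def
        sum.distrib scaleR_right_distrib)
  also have "\<dots> = (\<Sum>i\<in>I. \<beta> i) *\<^sub>R b"
    using assms(1) by (simp add: scaleR_sum_left)
  finally show ?thesis
    using assms(2) by simp
qed

lemma convex_comb_pos:
  fixes f :: "'a \<Rightarrow> real"
  assumes "finite I" and "\<And>i. i \<in> I \<Longrightarrow> \<beta> i \<ge> 0" and "(\<Sum>i\<in>I. \<beta> i) = 1"
    and "\<And>i. i \<in> I \<Longrightarrow> f i > 0"
  shows "(\<Sum>i\<in>I. \<beta> i * f i) > 0"
proof -
  obtain i0 where i0: "i0 \<in> I" "\<beta> i0 \<noteq> 0"
    using assms(3) sum.neutral by (metis zero_neq_one)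
  then have "0 < \<beta> i0 * f i0"
    using assms(2,4) by (simp add: less_le)
  also have "\<dots> \<le> (\<Sum>i\<in>I. \<beta> i * f i)"
    using assms i0(1) by (intro member_le_sum) (auto simp: less_imp_le)
  finally show ?thesis .
qed

theorem lemmaA2:
  fixes A :: "real^'n^'m" and b :: "real^'m" and l j :: nat
    and W :: "nat \<Rightarrow> real^'m" and X :: "nat \<Rightarrow> real^'n"
    and Y S :: "nat \<Rightarrow> real^'m" and \<beta> :: "nat \<Rightarrow> real"
  assumes "standing_assms A b"
    and "\<And>i. i \<in> {1..l} \<Longrightarrow> is_weighted_center A b (W i) (X i) (Y i) (S i)"
    and "\<And>i. i \<in> {1..l} \<Longrightarrow> 0 \<le> \<beta> i \<and> \<beta> i \<le> 1"
    and "(\<Sum>i=1..l. \<beta> i) = 1"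
    and "j \<in> {1..l}"
  shows "is_weighted_center A b
           (\<Sum>i=1..l. \<beta> i *\<^sub>R (\<chi> k. Y j $ k * W i $ k / Y i $ k))
           (\<Sum>i=1..l. \<beta> i *\<^sub>R X i) (Y j) (\<Sum>i=1..l. \<beta> i *\<^sub>R S i)
       \<and> (\<Sum>k\<in>UNIV. (\<Sum>i=1..l. \<beta> i *\<^sub>R (\<chi> k. Y j $ k * W i $ k / Y i $ k)) $ k)
         = (\<Sum>k\<in>UNIV. W j $ k)"
proof -
  define x where "x = (\<Sum>i=1..l. \<beta> i *\<^sub>R X i)"
  define s where "s = (\<Sum>i=1..l. \<beta> i *\<^sub>R S i)"
  note center = assms(2)[unfolded is_weighted_center_def]
  have weight_eq: "(\<Sum>i=1..l. \<beta> i *\<^sub>R (\<chi> k. Y j $ k * W i $ k / Y i $ k))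
      = (\<chi> k. s $ k * Y j $ k)"
  proof -
    have "\<beta> i * (Y j $ k * W i $ k / Y i $ k) = \<beta> i * S i $ k * Y j $ k" if "i \<in> {1..l}" for i k
      by (simp add: weighted_center_weight_div_dual[OF assms(2)[OF that], symmetric])
    then show ?thesis
      by (simp add: vec_eq_iff s_def sum_distrib_right)
  qed
  have "A *v x + s = b"
    unfolding x_def s_def using center assms(4) by (intro affine_comb_feasible) auto
  moreover have "s $ k > 0" for k
  proof -
    have "0 < (\<Sum>i=1..l. \<beta> i * S i $ k)"
      using center assms(3,4) by (intro convex_comb_pos) auto
    then show ?thesis
      by (simp add: s_def)
  qed
  ultimately have wc: "is_weighted_center A b (\<chi> k. s $ k * Y j $ k) x (Y j) s"
    using center[OF assms(5)] weighted_center_dual_pos[OF assms(2)[OF assms(5)]]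
    by (intro is_weighted_centerI) auto
  have "Y j \<bullet> S i = Y j \<bullet> S j" if "i \<in> {1..l}" for i
    using center[OF that] center[OF assms(5)] by (intro inner_dual_slack_eq[of A _ "X i" _ b]) auto
  then have "Y j \<bullet> s = (\<Sum>i=1..l. \<beta> i * (Y j \<bullet> S j))"
    by (simp add: s_def inner_sum_right)
  also have "\<dots> = (\<Sum>k\<in>UNIV. W j $ k)"
    using assms(4) weighted_center_total_weight[OF assms(2)[OF assms(5)]]
    by (simp add: sum_distrib_right[symmetric])
  finally show ?thesis
    unfolding weight_eq x_def[symmetric] s_def[symmetric]
    using wc weighted_center_total_weight[OF wc] by simp
qed

end
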